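(* Let $\omega(r)=\frac{r^2}{\sin^2r}-1$ (so $\omega(r)\searrow0$ as $r\searrow0$). Then $u(x)=\sin x$ on $(-\pi/4,\pi/4)$ is a Dirichlet $\omega$-minimizer: for every interval $(x-r,x+r)\subset(-\pi/4,\pi/4)$, $$\int_{x-r}^{x+r}(\cos s)^2\,ds\le(1+\omega(r))\int_{x-r}^{x+r}v'(s)^2\,ds,$$ where $v$ is the affine function with $v(x\pm r)=\sin(x\pm r)$ (the Dirichlet minimizer with these boundary values). *)

theory Defs
  imports "HOL-Analysis.Analysis"
begin

definition omega :: "real \<Rightarrow> real" where
  "omega r = r\<^sup>2 / (sin r)\<^sup>2 - 1"

definition affine_interp :: "(real \<Rightarrow> real) \<Rightarrow> real \<Rightarrow> real \<Rightarrow> real \<Rightarrow> real" where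
  "affine_interp u a b s = u a + (u b - u a) / (b - a) * (s - a)"

end

theory Submission
  imports Defs
begin

text \<open>
  Both sides are elementary integrals: the left side is \<open>r + cos (2x) sin (2r) / 2\<close>, while
  the slope of the interpolant is \<open>cos x sin r / r\<close>, so the factor
  \<open>1 + \<omega>(r) = r\<^sup>2 / sin\<^sup>2 r\<close> turns the right side into exactly
  \<open>2 r cos\<^sup>2 x = r + r cos (2x)\<close>. The inequality therefore reduces to
  \<open>sin (2r) \<le> 2r\<close>, multiplied by \<open>cos (2x) \<ge> 0\<close>, which holds because \<open>|x| \<le> \<pi>/4\<close>.
\<close>

lemma deriv_affine_interp: "deriv (affine_interp u a b) s = (u b - u a) / (b - a)"
proof -
  have "affine_interp u a b = (\<lambda>s. u a + (u b - u a) / (b - a) * (s - a))"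
    by (auto simp: affine_interp_def)
  moreover have "((\<lambda>s. u a + (u b - u a) / (b - a) * (s - a))
                   has_field_derivative (u b - u a) / (b - a)) (at s)"
    by (rule derivative_eq_intros refl | simp)+
  ultimately show ?thesis
    using DERIV_imp_deriv by metis
qed

lemma interval_integral_affine_interp_energy:
  "(LBINT s=a..b. (deriv (affine_interp u a b) s)\<^sup>2) = ((u b - u a) / (b - a))\<^sup>2 * (b - a)"
  by (simp add: deriv_affine_interp)

lemma has_field_derivative_cos_squared_antideriv:
  "((\<lambda>t. t / 2 + sin (2 * t) / 4) has_field_derivative (cos s)\<^sup>2) (at s within A)"
proof -
  have "((\<lambda>t. t / 2 + sin (2 * t) / 4) has_field_derivative 1/2 + cos (2 * s) * 2 / 4) (at s within A)"
    by (auto intro!: derivative_eq_intros)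
  moreover have "1/2 + cos (2 * s) * 2 / 4 = (cos s)\<^sup>2"
    using cos_double_cos[of s] by (simp add: field_simps)
  ultimately show ?thesis
    by simp
qed

lemma interval_integral_cos_squared:
  fixes a b :: real
  assumes "a \<le> b"
  shows "(LBINT s=a..b. (cos s)\<^sup>2) = (b - a) / 2 + (sin (2 * b) - sin (2 * a)) / 4"
proof -
  have "(LBINT s=a..b. (cos s)\<^sup>2) = (b / 2 + sin (2 * b) / 4) - (a / 2 + sin (2 * a) / 4)"
    using assms
    by (intro interval_integral_FTC_finite)
       (auto intro!: continuous_intros has_field_derivative_cos_squared_antideriv
             simp: has_real_derivative_iff_has_vector_derivative[symmetric])
  then show ?thesis
    by (simp add: field_simps)
qed

lemma one_plus_omega_mult_sin_squared:
  assumes "sin r \<noteq> 0"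
  shows "(1 + omega r) * (sin r)\<^sup>2 = r\<^sup>2"
  using assms by (simp add: omega_def)

lemma interval_integral_cos_squared_symmetric:
  fixes x r :: real
  assumes "r \<ge> 0"
  shows "(LBINT s=x-r..x+r. (cos s)\<^sup>2) = r + cos (2 * x) * sin (2 * r) / 2"
proof -
  have "sin (2 * (x + r)) - sin (2 * (x - r)) = 2 * cos (2 * x) * sin (2 * r)"
    by (simp add: distrib_left right_diff_distrib sin_add sin_diff)
  then show ?thesis
    using assms by (simp add: interval_integral_cos_squared field_simps)
qed

lemma omega_weighted_sin_interp_energy:
  fixes x r :: real
  assumes "sin r \<noteq> 0" and "r \<noteq> 0"
  shows "(1 + omega r) * (LBINT s=x-r..x+r. (deriv (affine_interp sin (x-r) (x+r)) s)\<^sup>2)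
           = 2 * r * (cos x)\<^sup>2"
proof -
  have "sin (x + r) - sin (x - r) = 2 * cos x * sin r"
    by (simp add: sin_add sin_diff)
  moreover have "(LBINT s=x-r..x+r. (deriv (affine_interp sin (x-r) (x+r)) s)\<^sup>2)
                   = ((sin (x + r) - sin (x - r)) / (2 * r))\<^sup>2 * (2 * r)"
    by (simp add: interval_integral_affine_interp_energy)
  ultimately have "(LBINT s=x-r..x+r. (deriv (affine_interp sin (x-r) (x+r)) s)\<^sup>2)
                     = (sin r)\<^sup>2 * (2 * (cos x)\<^sup>2 / r)"
    using assms(2) by (simp add: field_simps power2_eq_square)
  then have "(1 + omega r) * (LBINT s=x-r..x+r. (deriv (affine_interp sin (x-r) (x+r)) s)\<^sup>2)
               = ((1 + omega r) * (sin r)\<^sup>2) * (2 * (cos x)\<^sup>2 / r)"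
    by simp
  also have "\<dots> = r\<^sup>2 * (2 * (cos x)\<^sup>2 / r)"
    using one_plus_omega_mult_sin_squared[OF assms(1)] by (simp only:)
  also have "\<dots> = 2 * r * (cos x)\<^sup>2"
    using assms(2) by (simp add: power2_eq_square)
  finally show ?thesis .
qed

theorem mainTheorem8:
  fixes x r :: real
  assumes "r > 0" and "- (pi/4) \<le> x - r" and "x + r \<le> pi/4"
  shows "(LBINT s=x-r..x+r. (cos s)\<^sup>2)
           \<le> (1 + omega r) *
             (LBINT s=x-r..x+r. (deriv (affine_interp sin (x-r) (x+r)) s)\<^sup>2)"
proof -
  have "sin r > 0"
    using assms by (intro sin_gt_zero) (auto simp: pi_gt3)
  have "sin (2 * r) \<le> 2 * r"
    using assms by (intro sin_x_le_x) auto
  moreover have "cos (2 * x) \<ge> 0"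
    using assms by (intro cos_ge_zero) auto
  ultimately have "cos (2 * x) * sin (2 * r) \<le> 2 * (r * cos (2 * x))"
    using mult_left_mono[of "sin (2 * r)" "2 * r" "cos (2 * x)"] by (simp add: algebra_simps)
  moreover have "2 * r * (cos x)\<^sup>2 = r + r * cos (2 * x)"
    unfolding cos_double_cos by (simp add: algebra_simps)
  ultimately have "r + cos (2 * x) * sin (2 * r) / 2 \<le> 2 * r * (cos x)\<^sup>2"
    by linarith
  then show ?thesis
    using assms(1) \<open>sin r > 0\<close>
    by (simp add: interval_integral_cos_squared_symmetric omega_weighted_sin_interp_energy)
qed

end
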